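(* If $\varphi\in\mathcal L_\Diamond$ and ${\sf ITL}^0_\Diamond\not\vdash\varphi$, then $\varphi$ is falsified on some finite $\mathrm{sub}(\varphi)$-quasimodel, i.e. there is a finite $\mathrm{sub}(\varphi)$-quasimodel $\mathcal Q$ and $w\in|\mathcal Q|$ with $\varphi\in\ell^-_{\mathcal Q}(w)$.
   Context: $\mathcal L_\Diamond$ is the propositional language with $\bot,\wedge,\vee,\to$ and unary modalities $\bigcirc$, $\Diamond$; $\mathrm{sub}(\varphi)$ is the set of subformulas of $\varphi$. ${\sf ITL}^0_\Diamond$ is the least set of formulas containing all intuitionistic propositional tautologies and $\neg\bigcirc\bot$, $\bigcirc\varphi\wedge\bigcirc\psi\to\bigcirc(\varphi\wedge\psi)$, $\bigcirc(\varphi\vee\psi)\to\bigcirc\varphi\vee\bigcirc\psi$, $\bigcirc(\varphi\to\psi)\to(\bigcirc\varphi\to\bigcirc\psi)$, $\varphi\vee\bigcirc\Diamond\varphi\to\Diamond\varphi$, closed under modus ponens and the rules $\varphi/\bigcirc\varphi$, $(\varphi\to\psi)/(\Diamond\varphi\to\Diamond\psi)$, $(\bigcirc\varphi\to\varphi)/(\Diamond\varphi\to\varphi)$. For $\Sigma$ closed under subformulas, a $\Sigma$-type is a pair $\Phi=(\Phi^-;\Phi^+)$ of subsets of $\Sigma$ with $\Phi^-\cap\Phi^+=\varnothing$, $\Phi^-\cup\Phi^+=\Sigma$, $\bot\notin\Phi^+$, for $\varphi\wedge\psi\in\Sigma$: $\varphi\wedge\psi\in\Phi^+$ iff $\varphi,\psi\in\Phi^+$;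 for $\varphi\vee\psi\in\Sigma$: $\varphi\vee\psi\in\Phi^+$ iff $\varphi\in\Phi^+$ or $\psi\in\Phi^+$; if $\varphi\to\psi\in\Phi^+$ then $\varphi\in\Phi^-$ or $\psi\in\Phi^+$; if $\Diamond\varphi\in\Phi^-$ then $\varphi\in\Phi^-$. $\Phi\preccurlyeq_T\Psi$ iff $\Phi^+\subseteq\Psi^+$. $\Phi\,S_T\,\Psi$ iff: $\bigcirc\varphi\in\Phi^+\Rightarrow\varphi\in\Psi^+$; $\bigcirc\varphi\in\Phi^-\Rightarrow\varphi\in\Psi^-$; ($\Diamond\varphi\in\Phi^+$, $\varphi\in\Phi^-$)$\Rightarrow\Diamond\varphi\in\Psi^+$; $\Diamond\varphi\in\Phi^-\Rightarrow\Diamond\varphi\in\Psi^-$. A $\Sigma$-quasimodel is $(W,\preccurlyeq,S,\ell)$ where $\preccurlyeq$ is a partial order on $W$, $\ell$ maps $W$ to $\Sigma$-types with $w\preccurlyeq v\Rightarrow\ell(w)\preccurlyeq_T\ell(v)$, and whenever $\varphi\to\psi\in\ell^-(w)$ there is $v\succcurlyeq w$ with $\varphi\in\ell^+(v)$, $\psi\in\ell^-(v)$; and $S\subseteq W\times W$ is serial, forward-confluent (if $w\preccurlyeq w'$ and $w\,S\,v$ then some $v'\succcurlyeq v$ has $w'\,S\,v'$), sensible ($w\,S\,v\Rightarrow\ell(w)\,S_T\,\ell(v)$), and $\omega$-sensible (if $\Diamond\varphi\in\ell^+(w)$ then there are $n\ge0$ and $v$ with $w\,S^n\,v$ and $\varphi\in\ell^+(v)$).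 *)

theory Defs
  imports Main
begin

datatype fml =
    Var nat
  | Bot
  | And fml fml
  | Or fml fml
  | Imp fml fml
  | Nxt fml
  | Dia fml

abbreviation Neg :: "fml \<Rightarrow> fml" where "Neg \<phi> \<equiv> Imp \<phi> Bot"

fun sub :: "fml \<Rightarrow> fml set" where
  "sub (Var p) = {Var p}"
| "sub Bot = {Bot}"
| "sub (And \<phi> \<psi>) = insert (And \<phi> \<psi>) (sub \<phi> \<union> sub \<psi>)"
| "sub (Or \<phi> \<psi>) = insert (Or \<phi> \<psi>) (sub \<phi> \<union> sub \<psi>)"
| "sub (Imp \<phi> \<psi>) = insert (Imp \<phi> \<psi>) (sub \<phi> \<union> sub \<psi>)"
| "sub (Nxt \<phi>) = insert (Nxt \<phi>) (sub \<phi>)"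
| "sub (Dia \<phi>) = insert (Dia \<phi>) (sub \<phi>)"

text \<open>Intuitionistic propositional tautologies (substitution instances in the full
language) are generated by the standard Hilbert axiom schemes of IPC together with
modus ponens.\<close>

inductive ITL0 :: "fml \<Rightarrow> bool" where
  ipc_K:    "ITL0 (Imp \<phi> (Imp \<psi> \<phi>))"
| ipc_S:    "ITL0 (Imp (Imp \<phi> (Imp \<psi> \<chi>)) (Imp (Imp \<phi> \<psi>) (Imp \<phi> \<chi>)))"
| ipc_and1: "ITL0 (Imp (And \<phi> \<psi>) \<phi>)"
| ipc_and2: "ITL0 (Imp (And \<phi> \<psi>) \<psi>)"
| ipc_andI: "ITL0 (Imp \<phi> (Imp \<psi> (And \<phi> \<psi>)))"
| ipc_or1:  "ITL0 (Imp \<phi> (Or \<phi> \<psi>))"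
| ipc_or2:  "ITL0 (Imp \<psi> (Or \<phi> \<psi>))"
| ipc_orE:  "ITL0 (Imp (Imp \<phi> \<chi>) (Imp (Imp \<psi> \<chi>) (Imp (Or \<phi> \<psi>) \<chi>)))"
| ipc_efq:  "ITL0 (Imp Bot \<phi>)"
| ax_nbot:  "ITL0 (Neg (Nxt Bot))"
| ax_nand:  "ITL0 (Imp (And (Nxt \<phi>) (Nxt \<psi>)) (Nxt (And \<phi> \<psi>)))"
| ax_nor:   "ITL0 (Imp (Nxt (Or \<phi> \<psi>)) (Or (Nxt \<phi>) (Nxt \<psi>)))"
| ax_nimp:  "ITL0 (Imp (Nxt (Imp \<phi> \<psi>)) (Imp (Nxt \<phi>) (Nxt \<psi>)))"
| ax_dia:   "ITL0 (Imp (Or \<phi> (Nxt (Dia \<phi>))) (Dia \<phi>))"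
| mp:       "ITL0 (Imp \<phi> \<psi>) \<Longrightarrow> ITL0 \<phi> \<Longrightarrow> ITL0 \<psi>"
| nec:      "ITL0 \<phi> \<Longrightarrow> ITL0 (Nxt \<phi>)"
| dia_mono: "ITL0 (Imp \<phi> \<psi>) \<Longrightarrow> ITL0 (Imp (Dia \<phi>) (Dia \<psi>))"
| dia_ind:  "ITL0 (Imp (Nxt \<phi>) \<phi>) \<Longrightarrow> ITL0 (Imp (Dia \<phi>) \<phi>)"

text \<open>A type is a pair (Phi^-, Phi^+): first component = Phi^-, second = Phi^+.\<close>

definition is_type :: "fml set \<Rightarrow> fml set \<times> fml set \<Rightarrow> bool" where
  "is_type \<Sigma> \<Phi> \<longleftrightarrow>
     (let Fm = fst \<Phi>; Fp = snd \<Phi> in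
       Fm \<inter> Fp = {} \<and> Fm \<union> Fp = \<Sigma> \<and> Bot \<notin> Fp \<and>
       (\<forall>\<phi> \<psi>. And \<phi> \<psi> \<in> \<Sigma> \<longrightarrow> (And \<phi> \<psi> \<in> Fp \<longleftrightarrow> \<phi> \<in> Fp \<and> \<psi> \<in> Fp)) \<and>
       (\<forall>\<phi> \<psi>. Or \<phi> \<psi> \<in> \<Sigma> \<longrightarrow> (Or \<phi> \<psi> \<in> Fp \<longleftrightarrow> \<phi> \<in> Fp \<or> \<psi> \<in> Fp)) \<and>
       (\<forall>\<phi> \<psi>. Imp \<phi> \<psi> \<in> Fp \<longrightarrow> \<phi> \<in> Fm \<or> \<psi> \<in> Fp) \<and>
       (\<forall>\<phi>. Dia \<phi> \<in> Fm \<longrightarrow> \<phi> \<in> Fm))"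

definition type_le :: "fml set \<times> fml set \<Rightarrow> fml set \<times> fml set \<Rightarrow> bool" where
  "type_le \<Phi> \<Psi> \<longleftrightarrow> snd \<Phi> \<subseteq> snd \<Psi>"

definition type_S :: "fml set \<times> fml set \<Rightarrow> fml set \<times> fml set \<Rightarrow> bool" where
  "type_S \<Phi> \<Psi> \<longleftrightarrow>
     (\<forall>\<phi>. Nxt \<phi> \<in> snd \<Phi> \<longrightarrow> \<phi> \<in> snd \<Psi>) \<and>
     (\<forall>\<phi>. Nxt \<phi> \<in> fst \<Phi> \<longrightarrow> \<phi> \<in> fst \<Psi>) \<and>
     (\<forall>\<phi>. Dia \<phi> \<in> snd \<Phi> \<and> \<phi> \<in> fst \<Phi> \<longrightarrow> Dia \<phi> \<in> snd \<Psi>) \<and>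
     (\<forall>\<phi>. Dia \<phi> \<in> fst \<Phi> \<longrightarrow> Dia \<phi> \<in> fst \<Psi>)"

definition quasimodel ::
  "fml set \<Rightarrow> 'w set \<Rightarrow> ('w \<Rightarrow> 'w \<Rightarrow> bool) \<Rightarrow> ('w \<Rightarrow> 'w \<Rightarrow> bool)
     \<Rightarrow> ('w \<Rightarrow> fml set \<times> fml set) \<Rightarrow> bool" where
  "quasimodel \<Sigma> W le S lab \<longleftrightarrow>
     \<comment> \<open>le is a partial order on W\<close>
     (\<forall>w v. le w v \<longrightarrow> w \<in> W \<and> v \<in> W) \<and>
     (\<forall>w\<in>W. le w w) \<and>
     (\<forall>u\<in>W. \<forall>v\<in>W. \<forall>w\<in>W. le u v \<and> le v w \<longrightarrow> le u w) \<and>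
     (\<forall>u\<in>W. \<forall>v\<in>W. le u v \<and> le v u \<longrightarrow> u = v) \<and>
     \<comment> \<open>labels are types, monotone along le\<close>
     (\<forall>w\<in>W. is_type \<Sigma> (lab w)) \<and>
     (\<forall>w v. le w v \<longrightarrow> type_le (lab w) (lab v)) \<and>
     (\<forall>w\<in>W. \<forall>\<phi> \<psi>. Imp \<phi> \<psi> \<in> fst (lab w) \<longrightarrow>
        (\<exists>v. le w v \<and> \<phi> \<in> snd (lab v) \<and> \<psi> \<in> fst (lab v))) \<and>
     \<comment> \<open>S is a relation on W\<close>
     (\<forall>w v. S w v \<longrightarrow> w \<in> W \<and> v \<in> W) \<and>
     \<comment> \<open>serial\<close>
     (\<forall>w\<in>W. \<exists>v. S w v) \<and>
     \<comment> \<open>forward-confluent\<close>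
     (\<forall>w w' v. le w w' \<and> S w v \<longrightarrow> (\<exists>v'. le v v' \<and> S w' v')) \<and>
     \<comment> \<open>sensible\<close>
     (\<forall>w v. S w v \<longrightarrow> type_S (lab w) (lab v)) \<and>
     \<comment> \<open>omega-sensible\<close>
     (\<forall>w\<in>W. \<forall>\<phi>. Dia \<phi> \<in> snd (lab w) \<longrightarrow>
        (\<exists>n v. (S ^^ n) w v \<and> \<phi> \<in> snd (lab v)))"

end

theory Submission
  imports Defs
begin

text \<open>Fix a finite subformula-closed set \<open>\<Sigma>\<close>. A prime theory \<open>\<Delta>\<close> unfolds into a finite
  tree of \<open>\<Sigma>\<close>-types, its canonical moment: the root is labelled by the type of \<open>\<Delta>\<close> and
  the children are the canonical moments of the prime extensions of \<open>\<Delta>\<close> of a different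
  type. Since a type can grow only finitely often, there are finitely many canonical moments.
  Ordered by simulation and related by the successor relation induced by
  \<open>\<Delta> \<mapsto> {a. \<circle>a \<in> \<Delta>}\<close>, they form a finite quasimodel once simulation-equivalent moments
  are identified. Each canonical moment \<open>b\<close> has a characteristic formula that fails in a
  prime theory exactly when its canonical moment lies below \<open>b\<close>, so every upward-closed set
  of canonical moments is definable. This gives \<open>\<omega>\<close>-sensibility: the moments from which
  \<open>f\<close> is reachable are defined by some \<open>\<psi>\<close> with \<open>\<turnstile> f \<rightarrow> \<psi>\<close> and \<open>\<turnstile> \<circle>\<psi> \<rightarrow> \<psi>\<close>,
  whence \<open>\<turnstile> \<Diamond>f \<rightarrow> \<psi>\<close> by the induction rule. A prime theory omitting \<open>\<phi>\<close> supplies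
  the falsifying world.\<close>

section \<open>Derivations from hypotheses and prime theories\<close>

inductive derivable :: "fml set \<Rightarrow> fml \<Rightarrow> bool" where
  derivable_hyp: "a \<in> \<Gamma> \<Longrightarrow> derivable \<Gamma> a"
| derivable_thm: "ITL0 a \<Longrightarrow> derivable \<Gamma> a"
| derivable_mp: "derivable \<Gamma> (Imp a b) \<Longrightarrow> derivable \<Gamma> a \<Longrightarrow> derivable \<Gamma> b"

lemma ITL0_Imp_refl: "ITL0 (Imp a a)"
  using mp[OF mp[OF ipc_S ipc_K] ipc_K] .

lemma derivable_mono: "derivable \<Gamma> a \<Longrightarrow> \<Gamma> \<subseteq> \<Delta> \<Longrightarrow> derivable \<Delta> a"
  by (induction rule: derivable.induct) (auto intro: derivable.intros)

text \<open>Hypotheses are only used by modus ponens, never under the rules for \<open>Nxt\<close> and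
  \<open>Dia\<close>, so the deduction theorem holds.\<close>

lemma derivable_deduction: "derivable (insert a \<Gamma>) b \<Longrightarrow> derivable \<Gamma> (Imp a b)"
proof (induction "insert a \<Gamma>" b rule: derivable.induct)
  case (derivable_hyp b)
  then show ?case
  proof
    assume "b = a"
    then show ?thesis
      using ITL0_Imp_refl derivable_thm by simp
  next
    assume "b \<in> \<Gamma>"
    then show ?thesis
      using derivable.derivable_mp[OF derivable.derivable_thm[OF ipc_K] derivable.derivable_hyp] by blast
  qed
next
  case (derivable_thm b)
  then show ?case
    by (meson ipc_K mp derivable.derivable_thm)
next
  case (derivable_mp b c)
  then show ?case
    by (meson ipc_S derivable.derivable_mp derivable.derivable_thm)
qed

lemma ITL0_if_derivable_empty: "derivable {} a \<Longrightarrow> ITL0 a"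
  by (induction "{}::fml set" a rule: derivable.induct) (auto intro: mp)

lemma derivable_finite_subset:
  "derivable \<Gamma> a \<Longrightarrow> \<exists>\<Delta>. finite \<Delta> \<and> \<Delta> \<subseteq> \<Gamma> \<and> derivable \<Delta> a"
proof (induction rule: derivable.induct)
  case (derivable_hyp a \<Gamma>)
  then show ?case
    by (intro exI[of _ "{a}"]) (auto intro: derivable.intros)
next
  case (derivable_thm a \<Gamma>)
  then show ?case
    by (intro exI[of _ "{}"]) (auto intro: derivable.intros)
next
  case (derivable_mp \<Gamma> a b)
  then obtain \<Delta>1 \<Delta>2 where "finite \<Delta>1" "\<Delta>1 \<subseteq> \<Gamma>" "derivable \<Delta>1 (Imp a b)"
    and "finite \<Delta>2" "\<Delta>2 \<subseteq> \<Gamma>" "derivable \<Delta>2 a"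
    by blast
  then show ?case
    by (intro exI[of _ "\<Delta>1 \<union> \<Delta>2"]) (auto intro: derivable.derivable_mp derivable_mono)
qed

lemma derivable_Union_chain:
  assumes "derivable (\<Union>\<C>) a" "\<C> \<noteq> {}" "subset.chain \<A> \<C>"
  shows "\<exists>\<Delta>\<in>\<C>. derivable \<Delta> a"
proof -
  obtain F where "finite F" "F \<subseteq> \<Union>\<C>" "derivable F a"
    using derivable_finite_subset[OF assms(1)] by blast
  moreover obtain \<Delta> where "\<Delta> \<in> \<C>" "F \<subseteq> \<Delta>"
    using finite_subset_Union_chain[OF \<open>finite F\<close> \<open>F \<subseteq> \<Union>\<C>\<close> assms(2,3)] by blast
  ultimately show ?thesis
    using derivable_mono by blast
qed

definition prime_theory :: "fml set \<Rightarrow> bool" where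
  "prime_theory \<Delta> \<longleftrightarrow>
     (\<forall>a. derivable \<Delta> a \<longrightarrow> a \<in> \<Delta>) \<and> Bot \<notin> \<Delta> \<and> (\<forall>a b. Or a b \<in> \<Delta> \<longrightarrow> a \<in> \<Delta> \<or> b \<in> \<Delta>)"

lemma maximal_non_derivable_prime_theory:
  assumes "\<not> derivable M c" and maximal: "\<And>a. a \<notin> M \<Longrightarrow> derivable (insert a M) c"
  shows "prime_theory M"
proof -
  have Imp_c: "derivable M (Imp a c)" if "a \<notin> M" for a
    using maximal[OF that] by (rule derivable_deduction)
  have "a \<in> M" if "derivable M a" for a
    using Imp_c that assms(1) derivable_mp by blast
  moreover have "Bot \<notin> M"
    using assms(1) derivable_mp[OF derivable_thm[OF ipc_efq] derivable_hyp] by blast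
  moreover have "a \<in> M \<or> b \<in> M" if "Or a b \<in> M" for a b
    using Imp_c[of a] Imp_c[of b] that assms(1)
      derivable_mp[OF derivable_mp[OF derivable_mp[OF derivable_thm[OF ipc_orE]]]] derivable_hyp
    by metis
  ultimately show ?thesis
    unfolding prime_theory_def by blast
qed

lemma prime_theory_extension:
  assumes "\<not> derivable \<Gamma> c"
  shows "\<exists>\<Delta>. prime_theory \<Delta> \<and> \<Gamma> \<subseteq> \<Delta> \<and> c \<notin> \<Delta>"
proof -
  let ?A = "{\<Delta>. \<Gamma> \<subseteq> \<Delta> \<and> \<not> derivable \<Delta> c}"
  have "\<exists>M\<in>?A. \<forall>\<Delta>\<in>?A. M \<subseteq> \<Delta> \<longrightarrow> \<Delta> = M"
  proof (rule subset_Zorn_nonempty)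
    show "?A \<noteq> {}"
      using assms by blast
    show "\<Union>\<C> \<in> ?A" if "\<C> \<noteq> {}" and chain: "subset.chain ?A \<C>" for \<C>
    proof -
      have members: "\<C> \<subseteq> ?A"
        using chain by (simp add: subset.chain_def)
      then have "\<Gamma> \<subseteq> \<Union>\<C>"
        using \<open>\<C> \<noteq> {}\<close> by blast
      moreover have "\<not> derivable (\<Union>\<C>) c"
        using derivable_Union_chain[OF _ \<open>\<C> \<noteq> {}\<close> chain] members by blast
      ultimately show ?thesis
        by blast
    qed
  qed
  then obtain M where M: "M \<in> ?A" and maximal: "\<forall>\<Delta>\<in>?A. M \<subseteq> \<Delta> \<longrightarrow> \<Delta> = M"
    by blast
  have "derivable (insert a M) c" if "a \<notin> M" for a
  proof (rule ccontr)
    assume "\<not> derivable (insert a M) c"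
    then have "insert a M \<in> ?A"
      using M by blast
    then show False
      using maximal that by blast
  qed
  then have "prime_theory M"
    using maximal_non_derivable_prime_theory M by blast
  then show ?thesis
    using M derivable_hyp by blast
qed

lemma prime_theory_derivable: "prime_theory \<Delta> \<Longrightarrow> derivable \<Delta> a \<Longrightarrow> a \<in> \<Delta>"
  unfolding prime_theory_def by blast

lemma prime_theory_ITL0: "prime_theory \<Delta> \<Longrightarrow> ITL0 a \<Longrightarrow> a \<in> \<Delta>"
  using prime_theory_derivable derivable_thm by blast

lemma prime_theory_mp: "prime_theory \<Delta> \<Longrightarrow> Imp a b \<in> \<Delta> \<Longrightarrow> a \<in> \<Delta> \<Longrightarrow> b \<in> \<Delta>"
  using prime_theory_derivable derivable_mp derivable_hyp by metis

lemma prime_theory_ITL0_Imp: "prime_theory \<Delta> \<Longrightarrow> ITL0 (Imp a b) \<Longrightarrow> a \<in> \<Delta> \<Longrightarrow> b \<in> \<Delta>"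
  using prime_theory_mp prime_theory_ITL0 by blast

lemma prime_theory_Bot: "prime_theory \<Delta> \<Longrightarrow> Bot \<notin> \<Delta>"
  unfolding prime_theory_def by blast

lemma prime_theory_Or: "prime_theory \<Delta> \<Longrightarrow> Or a b \<in> \<Delta> \<longleftrightarrow> a \<in> \<Delta> \<or> b \<in> \<Delta>"
  using prime_theory_ITL0_Imp[OF _ ipc_or1] prime_theory_ITL0_Imp[OF _ ipc_or2]
  unfolding prime_theory_def by blast

lemma prime_theory_And: "prime_theory \<Delta> \<Longrightarrow> And a b \<in> \<Delta> \<longleftrightarrow> a \<in> \<Delta> \<and> b \<in> \<Delta>"
  using prime_theory_ITL0_Imp[OF _ ipc_and1] prime_theory_ITL0_Imp[OF _ ipc_and2]
    prime_theory_mp[OF _ prime_theory_ITL0_Imp[OF _ ipc_andI]]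
  by blast

lemma prime_theory_Imp_counterexample:
  assumes "prime_theory \<Delta>" "Imp a b \<notin> \<Delta>"
  shows "\<exists>\<Delta>'. prime_theory \<Delta>' \<and> \<Delta> \<subseteq> \<Delta>' \<and> a \<in> \<Delta>' \<and> b \<notin> \<Delta>'"
proof -
  have "\<not> derivable (insert a \<Delta>) b"
    using assms derivable_deduction prime_theory_derivable by blast
  then show ?thesis
    using prime_theory_extension by blast
qed

lemma prime_theory_Imp:
  "prime_theory \<Delta> \<Longrightarrow>
     Imp a b \<in> \<Delta> \<longleftrightarrow> (\<forall>\<Delta>'. prime_theory \<Delta>' \<longrightarrow> \<Delta> \<subseteq> \<Delta>' \<longrightarrow> a \<in> \<Delta>' \<longrightarrow> b \<in> \<Delta>')"
  using prime_theory_Imp_counterexample prime_theory_mp by blast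

lemma ITL0_completeness: "(\<And>\<Delta>. prime_theory \<Delta> \<Longrightarrow> a \<in> \<Delta>) \<Longrightarrow> ITL0 a"
  using prime_theory_extension[of "{}" a] ITL0_if_derivable_empty by blast

lemma ITL0_Imp_completeness:
  "(\<And>\<Delta>. prime_theory \<Delta> \<Longrightarrow> a \<in> \<Delta> \<Longrightarrow> b \<in> \<Delta>) \<Longrightarrow> ITL0 (Imp a b)"
  by (rule ITL0_completeness) (meson prime_theory_Imp)

definition Top :: fml where
  "Top = Imp Bot Bot"

fun Conj :: "fml list \<Rightarrow> fml" where
  "Conj [] = Top"
| "Conj (a # as) = And a (Conj as)"

fun Disj :: "fml list \<Rightarrow> fml" where
  "Disj [] = Bot"
| "Disj (a # as) = Or a (Disj as)"

lemma prime_theory_Conj: "prime_theory \<Delta> \<Longrightarrow> Conj as \<in> \<Delta> \<longleftrightarrow> set as \<subseteq> \<Delta>"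
  by (induction as) (auto simp: prime_theory_And Top_def intro: prime_theory_ITL0 ipc_efq)

lemma prime_theory_Disj: "prime_theory \<Delta> \<Longrightarrow> Disj as \<in> \<Delta> \<longleftrightarrow> set as \<inter> \<Delta> \<noteq> {}"
  by (induction as) (auto simp: prime_theory_Or prime_theory_Bot)

lemma prime_theory_Imp_Conj_Disj:
  "prime_theory \<Delta> \<Longrightarrow> Imp (Conj as) (Disj bs) \<notin> \<Delta> \<longleftrightarrow>
     (\<exists>\<Delta>'. prime_theory \<Delta>' \<and> \<Delta> \<subseteq> \<Delta>' \<and> set as \<subseteq> \<Delta>' \<and> set bs \<inter> \<Delta>' = {})"
  by (auto simp: prime_theory_Imp prime_theory_Conj prime_theory_Disj)

definition next_theory :: "fml set \<Rightarrow> fml set" where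
  "next_theory \<Delta> = {a. Nxt a \<in> \<Delta>}"

lemma next_theory_mono: "\<Delta> \<subseteq> \<Delta>' \<Longrightarrow> next_theory \<Delta> \<subseteq> next_theory \<Delta>'"
  unfolding next_theory_def by auto

lemma prime_theory_next_theory:
  assumes "prime_theory \<Delta>"
  shows "prime_theory (next_theory \<Delta>)"
proof -
  have "Nxt a \<in> \<Delta>" if "derivable (next_theory \<Delta>) a" for a
    using that
  proof (induction "next_theory \<Delta>" a rule: derivable.induct)
    case (derivable_hyp a)
    then show ?case
      by (simp add: next_theory_def)
  next
    case (derivable_thm a)
    then show ?case
      using assms prime_theory_ITL0 nec by blast
  next
    case (derivable_mp a b)
    then show ?case
      using assms prime_theory_ITL0_Imp[OF _ ax_nimp] prime_theory_mp by blast
  qed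
  moreover have "Bot \<notin> next_theory \<Delta>"
    using assms prime_theory_ITL0_Imp[OF _ ax_nbot] prime_theory_Bot
    by (auto simp: next_theory_def)
  moreover have "a \<in> next_theory \<Delta> \<or> b \<in> next_theory \<Delta>" if "Or a b \<in> next_theory \<Delta>" for a b
    using that assms prime_theory_ITL0_Imp[OF _ ax_nor] prime_theory_Or
    by (auto simp: next_theory_def)
  ultimately show ?thesis
    unfolding prime_theory_def next_theory_def by auto
qed

lemma prime_theory_Dia:
  "prime_theory \<Delta> \<Longrightarrow> a \<in> \<Delta> \<or> Nxt (Dia a) \<in> \<Delta> \<Longrightarrow> Dia a \<in> \<Delta>"
  using prime_theory_ITL0_Imp[OF _ ax_dia] prime_theory_Or by blast

text \<open>The converse of \<open>ax_dia\<close>, obtained from the induction rule \<open>dia_ind\<close> applied to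
  \<open>a \<or> \<circle>\<Diamond>a\<close>.\<close>

lemma ITL0_Dia_unfold: "ITL0 (Imp (Dia a) (Or a (Nxt (Dia a))))"
proof -
  let ?p = "Or a (Nxt (Dia a))"
  have "ITL0 (Imp (Nxt ?p) ?p)"
  proof (rule ITL0_Imp_completeness)
    fix \<Delta> assume \<Delta>: "prime_theory \<Delta>" "Nxt ?p \<in> \<Delta>"
    then have "prime_theory (next_theory \<Delta>)" "?p \<in> next_theory \<Delta>"
      using prime_theory_next_theory by (auto simp: next_theory_def)
    then have "Dia a \<in> next_theory \<Delta>"
      using prime_theory_Dia prime_theory_Or by blast
    then show "?p \<in> \<Delta>"
      using \<Delta> prime_theory_Or by (auto simp: next_theory_def)
  qed
  then have "ITL0 (Imp (Dia ?p) ?p)"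
    by (rule dia_ind)
  moreover have "ITL0 (Imp (Dia a) (Dia ?p))"
    by (rule dia_mono[OF ipc_or1])
  ultimately show ?thesis
    by (meson ITL0_Imp_completeness prime_theory_ITL0_Imp)
qed

section \<open>Moments\<close>

datatype moment = Moment (label: "fml set \<times> fml set") (children: "moment list")

inductive subtree :: "moment \<Rightarrow> moment \<Rightarrow> bool" where
  subtree_refl: "subtree w w"
| subtree_child: "c \<in> set (children w) \<Longrightarrow> subtree c v \<Longrightarrow> subtree w v"

lemma subtree_trans: "subtree u v \<Longrightarrow> subtree v w \<Longrightarrow> subtree u w"
  by (induction rule: subtree.induct) (auto intro: subtree.intros)

lemma subtree_proper: "subtree w v \<Longrightarrow> v \<noteq> w \<Longrightarrow> \<exists>c\<in>set (children w). subtree c v"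
  by (cases rule: subtree.cases) auto

inductive moment_le :: "moment \<Rightarrow> moment \<Rightarrow> bool" where
  "subtree w w' \<Longrightarrow> label w' = label b \<Longrightarrow> (\<forall>c\<in>set (children b). moment_le w' c) \<Longrightarrow> moment_le w b"

lemma moment_le_iff:
  "moment_le w b \<longleftrightarrow>
     (\<exists>w'. subtree w w' \<and> label w' = label b \<and> (\<forall>c\<in>set (children b). moment_le w' c))"
  by (subst moment_le.simps) auto

lemma subtree_imp_moment_le: "subtree w c \<Longrightarrow> moment_le w c"
proof (induction c arbitrary: w)
  case (Moment L cs)
  have "moment_le (Moment L cs) c" if "c \<in> set cs" for c
    using Moment.IH that subtree_child[of c "Moment L cs" c] subtree_refl by simp
  then show ?case
    unfolding moment_le_iff[of w] using Moment.prems by (intro exI[of _ "Moment L cs"]) auto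
qed

lemma moment_le_refl: "moment_le w w"
  by (rule subtree_imp_moment_le) (rule subtree_refl)

lemma moment_le_witness:
  "moment_le a b \<Longrightarrow> \<exists>a'. subtree a a' \<and> label a' = label b \<and> moment_le a' b"
  unfolding moment_le_iff[of a] by (metis moment_le_iff subtree_refl)

lemma moment_le_subtree:
  "subtree b b' \<Longrightarrow> moment_le a b \<Longrightarrow> \<exists>a'. subtree a a' \<and> moment_le a' b'"
proof (induction b b' arbitrary: a rule: subtree.induct)
  case (subtree_refl w)
  then show ?case
    by (auto intro: subtree.intros)
next
  case (subtree_child c w v)
  then obtain a1 where "subtree a a1" "moment_le a1 c"
    by (auto simp: moment_le_iff[of a w])
  then show ?case
    using subtree_child.IH subtree_trans by blast
qed

lemma moment_le_trans: "moment_le a b \<Longrightarrow> moment_le b c \<Longrightarrow> moment_le a c"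
proof (induction c arbitrary: a b)
  case (Moment L cs)
  obtain b' where b': "subtree b b'" "label b' = L" "\<forall>c\<in>set cs. moment_le b' c"
    using Moment.prems(2) by (auto simp: moment_le_iff[of b])
  obtain a' where a': "subtree a a'" "moment_le a' b'"
    using moment_le_subtree[OF b'(1) Moment.prems(1)] by blast
  obtain a'' where a'': "subtree a' a''" "label a'' = label b'" "moment_le a'' b'"
    using moment_le_witness[OF a'(2)] by blast
  have "\<forall>c\<in>set cs. moment_le a'' c"
    using Moment.IH a''(3) b'(3) by auto
  moreover have "subtree a a''"
    using subtree_trans[OF a'(1) a''(1)] .
  ultimately show ?case
    using a''(2) b'(2) by (intro moment_le.intros[of a a'']) auto
qed

definition list_of :: "'a set \<Rightarrow> 'a list" where
  "list_of A = (SOME as. set as = A)"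

lemma set_list_of: "finite A \<Longrightarrow> set (list_of A) = A"
  unfolding list_of_def by (rule someI_ex) (rule finite_list)

fun char_fml :: "moment \<Rightarrow> fml" where
  "char_fml (Moment L cs) = Imp (Conj (list_of (snd L))) (Disj (list_of (fst L) @ map char_fml cs))"

lemma char_fml_notin_prime_theory:
  assumes "prime_theory \<Delta>" "finite (fst L)" "finite (snd L)"
  shows "char_fml (Moment L cs) \<notin> \<Delta> \<longleftrightarrow>
    (\<exists>\<Delta>'. prime_theory \<Delta>' \<and> \<Delta> \<subseteq> \<Delta>' \<and> snd L \<subseteq> \<Delta>' \<and> fst L \<inter> \<Delta>' = {} \<and>
       (\<forall>c\<in>set cs. char_fml c \<notin> \<Delta>'))"
proof -
  have "char_fml (Moment L cs) \<notin> \<Delta> \<longleftrightarrow>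
    (\<exists>\<Delta>'. prime_theory \<Delta>' \<and> \<Delta> \<subseteq> \<Delta>' \<and> snd L \<subseteq> \<Delta>' \<and> (fst L \<union> char_fml ` set cs) \<inter> \<Delta>' = {})"
    using prime_theory_Imp_Conj_Disj[OF assms(1)] set_list_of[OF assms(2)] set_list_of[OF assms(3)]
    by simp
  also have "\<dots> \<longleftrightarrow> (\<exists>\<Delta>'. prime_theory \<Delta>' \<and> \<Delta> \<subseteq> \<Delta>' \<and> snd L \<subseteq> \<Delta>' \<and> fst L \<inter> \<Delta>' = {} \<and>
       (\<forall>c\<in>set cs. char_fml c \<notin> \<Delta>'))"
    by blast
  finally show ?thesis .
qed

inductive moment_succ :: "moment set \<Rightarrow> moment \<Rightarrow> moment \<Rightarrow> bool" for K where
  "type_S (label a) (label b) \<Longrightarrow> (\<forall>c\<in>set (children a). \<exists>d\<in>K. moment_le b d \<and> moment_succ K c d)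
    \<Longrightarrow> moment_succ K a b"

lemma moment_succ_iff:
  "moment_succ K a b \<longleftrightarrow>
     type_S (label a) (label b) \<and> (\<forall>c\<in>set (children a). \<exists>d\<in>K. moment_le b d \<and> moment_succ K c d)"
  by (subst moment_succ.simps) auto

lemma moment_succ_subtree:
  "subtree a a' \<Longrightarrow> moment_succ K a b \<Longrightarrow> b \<in> K \<Longrightarrow> \<exists>b'\<in>K. moment_le b b' \<and> moment_succ K a' b'"
proof (induction a a' arbitrary: b rule: subtree.induct)
  case (subtree_refl w)
  then show ?case
    using moment_le_refl by blast
next
  case (subtree_child c w v)
  then obtain d where "d \<in> K" "moment_le b d" "moment_succ K c d"
    using moment_succ_iff[of K w b] by auto
  then show ?case
    using subtree_child.IH moment_le_trans by blast
qed

lemma moment_succ_confluent: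
  "moment_le a a' \<Longrightarrow> moment_succ K a b \<Longrightarrow> b \<in> K \<Longrightarrow> \<exists>b'\<in>K. moment_le b b' \<and> moment_succ K a' b'"
proof (induction a' arbitrary: a b)
  case (Moment L cs)
  obtain a1 where a1: "subtree a a1" "label a1 = L" "\<forall>c\<in>set cs. moment_le a1 c"
    using Moment.prems(1) by (auto simp: moment_le_iff[of a])
  obtain b1 where b1: "b1 \<in> K" "moment_le b b1" "moment_succ K a1 b1"
    using moment_succ_subtree[OF a1(1) Moment.prems(2,3)] by blast
  have "moment_succ K (Moment L cs) b1"
    unfolding moment_succ_iff[of K "Moment L cs"]
    using b1 a1 Moment.IH moment_succ_iff[of K a1 b1] by auto
  then show ?case
    using b1 by blast
qed

section \<open>Canonical moments\<close>

lemma sub_refl: "a \<in> sub a"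
  by (cases a) auto

lemma sub_trans: "b \<in> sub a \<Longrightarrow> sub b \<subseteq> sub a"
  by (induction a) (auto intro: sub_refl)

lemma finite_sub: "finite (sub a)"
  by (induction a) auto

locale closed_fragment =
  fixes \<Sigma> :: "fml set"
  assumes finite_fragment: "finite \<Sigma>"
    and sub_closed: "a \<in> \<Sigma> \<Longrightarrow> sub a \<subseteq> \<Sigma>"
begin

lemma
  shows closed_And: "And a b \<in> \<Sigma> \<Longrightarrow> a \<in> \<Sigma> \<and> b \<in> \<Sigma>"
    and closed_Or: "Or a b \<in> \<Sigma> \<Longrightarrow> a \<in> \<Sigma> \<and> b \<in> \<Sigma>"
    and closed_Imp: "Imp a b \<in> \<Sigma> \<Longrightarrow> a \<in> \<Sigma> \<and> b \<in> \<Sigma>"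
    and closed_Nxt: "Nxt a \<in> \<Sigma> \<Longrightarrow> a \<in> \<Sigma>"
    and closed_Dia: "Dia a \<in> \<Sigma> \<Longrightarrow> a \<in> \<Sigma>"
  using sub_closed sub_refl by fastforce+

definition type_of :: "fml set \<Rightarrow> fml set \<times> fml set" where
  "type_of \<Delta> = (\<Sigma> - \<Delta>, \<Sigma> \<inter> \<Delta>)"

lemma is_type_type_of:
  assumes "prime_theory \<Delta>"
  shows "is_type \<Sigma> (type_of \<Delta>)"
  unfolding is_type_def type_of_def Let_def fst_conv snd_conv
proof (intro conjI allI impI)
  fix a b
  show "And a b \<in> \<Sigma> \<Longrightarrow> And a b \<in> \<Sigma> \<inter> \<Delta> \<longleftrightarrow> a \<in> \<Sigma> \<inter> \<Delta> \<and> b \<in> \<Sigma> \<inter> \<Delta>"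
    using closed_And prime_theory_And[OF assms] by blast
  show "Or a b \<in> \<Sigma> \<Longrightarrow> Or a b \<in> \<Sigma> \<inter> \<Delta> \<longleftrightarrow> a \<in> \<Sigma> \<inter> \<Delta> \<or> b \<in> \<Sigma> \<inter> \<Delta>"
    using closed_Or prime_theory_Or[OF assms] by blast
  show "Imp a b \<in> \<Sigma> \<inter> \<Delta> \<Longrightarrow> a \<in> \<Sigma> - \<Delta> \<or> b \<in> \<Sigma> \<inter> \<Delta>"
    using closed_Imp prime_theory_mp[OF assms] by blast
  show "Dia a \<in> \<Sigma> - \<Delta> \<Longrightarrow> a \<in> \<Sigma> - \<Delta>"
    using closed_Dia prime_theory_Dia[OF assms] by blast
qed (use prime_theory_Bot[OF assms] in auto)

lemma type_S_next_theory:
  assumes "prime_theory \<Delta>"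
  shows "type_S (type_of \<Delta>) (type_of (next_theory \<Delta>))"
  unfolding type_S_def type_of_def fst_conv snd_conv next_theory_def
proof (intro conjI allI impI)
  fix a
  show "Dia a \<in> \<Sigma> \<inter> \<Delta> \<and> a \<in> \<Sigma> - \<Delta> \<Longrightarrow> Dia a \<in> \<Sigma> \<inter> {a. Nxt a \<in> \<Delta>}"
    using prime_theory_ITL0_Imp[OF assms ITL0_Dia_unfold] prime_theory_Or[OF assms] by blast
  show "Dia a \<in> \<Sigma> - \<Delta> \<Longrightarrow> Dia a \<in> \<Sigma> - {a. Nxt a \<in> \<Delta>}"
    using prime_theory_Dia[OF assms] by blast
qed (use closed_Nxt in blast)+

definition strict_ext :: "fml set \<Rightarrow> fml set set" where
  "strict_ext \<Delta> = {\<Delta>'. prime_theory \<Delta>' \<and> \<Delta> \<subseteq> \<Delta>' \<and> type_of \<Delta>' \<noteq> type_of \<Delta>}"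

lemma strict_ext_antimono:
  "\<Delta> \<subseteq> \<Delta>' \<Longrightarrow> type_of \<Delta>' = type_of \<Delta> \<Longrightarrow> strict_ext \<Delta>' \<subseteq> strict_ext \<Delta>"
  unfolding strict_ext_def by auto

definition gap :: "fml set \<Rightarrow> nat" where
  "gap \<Delta> = card (\<Sigma> - \<Delta>)"

lemma gap_strict_ext: "\<Delta>' \<in> strict_ext \<Delta> \<Longrightarrow> gap \<Delta>' < gap \<Delta>"
proof -
  assume "\<Delta>' \<in> strict_ext \<Delta>"
  then have "\<Sigma> - \<Delta>' \<subset> \<Sigma> - \<Delta>"
    by (auto simp: strict_ext_def type_of_def)
  then show ?thesis
    unfolding gap_def using finite_fragment by (meson finite_Diff psubset_card_mono)
qed

function canon :: "fml set \<Rightarrow> moment" where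
  "canon \<Delta> = Moment (type_of \<Delta>) (list_of (canon ` strict_ext \<Delta>))"
  by auto
termination
  by (relation "measure gap") (simp_all add: gap_strict_ext)

declare canon.simps [simp del]

lemma label_canon [simp]: "label (canon \<Delta>) = type_of \<Delta>"
  by (subst canon.simps) simp

lemma finite_range_canon: "finite (range canon)"
proof -
  have "finite (canon ` {\<Delta>. gap \<Delta> < n})" for n
  proof (induction n)
    case 0
    then show ?case
      by simp
  next
    case (Suc n)
    let ?Mk = "\<lambda>(T, A). Moment T (list_of A)"
    have "canon ` {\<Delta>. gap \<Delta> < Suc n} \<subseteq> ?Mk ` ((Pow \<Sigma> \<times> Pow \<Sigma>) \<times> Pow (canon ` {\<Delta>. gap \<Delta> < n}))"
    proof
      fix x assume "x \<in> canon ` {\<Delta>. gap \<Delta> < Suc n}"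
      then obtain \<Delta> where \<Delta>: "gap \<Delta> < Suc n" "x = canon \<Delta>"
        by blast
      then have "canon ` strict_ext \<Delta> \<subseteq> canon ` {\<Delta>. gap \<Delta> < n}"
        using gap_strict_ext by fastforce
      then have "(type_of \<Delta>, canon ` strict_ext \<Delta>) \<in> (Pow \<Sigma> \<times> Pow \<Sigma>) \<times> Pow (canon ` {\<Delta>. gap \<Delta> < n})"
        by (auto simp: type_of_def)
      moreover have "x = ?Mk (type_of \<Delta>, canon ` strict_ext \<Delta>)"
        using \<Delta>(2) canon.simps[of \<Delta>] by simp
      ultimately show "x \<in> ?Mk ` ((Pow \<Sigma> \<times> Pow \<Sigma>) \<times> Pow (canon ` {\<Delta>. gap \<Delta> < n}))"
        by (rule rev_image_eqI)
    qed
    then show ?case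
      by (rule finite_subset) (use Suc finite_fragment in simp)
  qed
  moreover have "range canon = canon ` {\<Delta>. gap \<Delta> < Suc (card \<Sigma>)}"
    unfolding gap_def using finite_fragment by (auto simp: card_mono le_imp_less_Suc)
  ultimately show ?thesis
    by simp
qed

lemma children_canon: "set (children (canon \<Delta>)) = canon ` strict_ext \<Delta>"
proof -
  have "finite (canon ` strict_ext \<Delta>)"
    by (rule finite_subset[OF _ finite_range_canon]) blast
  then show ?thesis
    using canon.simps[of \<Delta>] by (simp add: set_list_of)
qed

definition canon_moments :: "moment set" where
  "canon_moments = canon ` {\<Delta>. prime_theory \<Delta>}"

lemma canon_in_canon_moments: "prime_theory \<Delta> \<Longrightarrow> canon \<Delta> \<in> canon_moments"
  unfolding canon_moments_def by blast

lemma finite_canon_moments: "finite canon_moments"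
  unfolding canon_moments_def by (rule finite_subset[OF _ finite_range_canon]) blast

lemma subtree_canon:
  "subtree (canon \<Delta>) w \<Longrightarrow> prime_theory \<Delta> \<Longrightarrow> \<exists>\<Delta>'. prime_theory \<Delta>' \<and> \<Delta> \<subseteq> \<Delta>' \<and> w = canon \<Delta>'"
proof (induction "canon \<Delta>" w arbitrary: \<Delta> rule: subtree.induct)
  case subtree_refl
  then show ?case
    by blast
next
  case (subtree_child c v)
  then obtain \<Delta>1 where "\<Delta>1 \<in> strict_ext \<Delta>" "c = canon \<Delta>1"
    by (auto simp: children_canon)
  then show ?case
    using subtree_child.hyps(3) by (fastforce simp: strict_ext_def)
qed

lemma canon_moments_subtree:
  "w \<in> canon_moments \<Longrightarrow> subtree w v \<Longrightarrow> v \<in> canon_moments \<and> snd (label w) \<subseteq> snd (label v)"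
  unfolding canon_moments_def using subtree_canon by (fastforce simp: type_of_def)

lemma canon_moments_moment_le_label:
  "a \<in> canon_moments \<Longrightarrow> moment_le a b \<Longrightarrow> snd (label a) \<subseteq> snd (label b)"
  using moment_le_witness canon_moments_subtree by metis

lemma canon_moments_label_eq:
  "a \<in> canon_moments \<Longrightarrow> b \<in> canon_moments \<Longrightarrow> snd (label a) = snd (label b) \<Longrightarrow> label a = label b"
  unfolding canon_moments_def by (auto simp: type_of_def)

lemma children_canon_moments:
  "b \<in> canon_moments \<Longrightarrow> c \<in> set (children b) \<Longrightarrow> c \<in> canon_moments \<and> label c \<noteq> label b"
  unfolding canon_moments_def by (auto simp: children_canon strict_ext_def)

lemma moment_le_canon: "prime_theory \<Delta>' \<Longrightarrow> \<Delta> \<subseteq> \<Delta>' \<Longrightarrow> moment_le (canon \<Delta>) (canon \<Delta>')"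
proof (cases "type_of \<Delta>' = type_of \<Delta>")
  case True
  assume "\<Delta> \<subseteq> \<Delta>'"
  then have "set (children (canon \<Delta>')) \<subseteq> set (children (canon \<Delta>))"
    using strict_ext_antimono[OF _ True] by (simp add: children_canon image_mono)
  then show ?thesis
    using True subtree_refl
    by (intro moment_le.intros[of _ "canon \<Delta>"]) (auto intro: subtree_imp_moment_le subtree_child)
next
  case False
  assume "prime_theory \<Delta>'" "\<Delta> \<subseteq> \<Delta>'"
  then have "canon \<Delta>' \<in> set (children (canon \<Delta>))"
    using False by (auto simp: children_canon strict_ext_def)
  then show ?thesis
    by (meson subtree_imp_moment_le subtree_refl subtree_child)
qed

lemma moment_le_canon_same_type:
  assumes le: "moment_le (canon \<Delta>') c" and "label c \<noteq> type_of \<Delta>'"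
    and "\<Delta> \<subseteq> \<Delta>'" "type_of \<Delta>' = type_of \<Delta>"
  shows "moment_le (canon \<Delta>) c"
proof -
  obtain w where w: "subtree (canon \<Delta>') w" "label w = label c" "\<forall>c'\<in>set (children c). moment_le w c'"
    using le unfolding moment_le_iff[of "canon \<Delta>'"] by blast
  then have "w \<noteq> canon \<Delta>'"
    using assms(2) by auto
  then obtain c1 where "c1 \<in> set (children (canon \<Delta>'))" "subtree c1 w"
    using subtree_proper w(1) by blast
  moreover have "set (children (canon \<Delta>')) \<subseteq> set (children (canon \<Delta>))"
    using strict_ext_antimono[OF assms(3,4)] by (auto simp: children_canon)
  ultimately have "subtree (canon \<Delta>) w"
    using subtree_child by blast
  then show ?thesis
    using w by (intro moment_le.intros) auto
qed

lemma moment_le_canon_iff: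
  assumes "prime_theory \<Delta>" "\<forall>c\<in>set cs. label c \<noteq> L"
  shows "moment_le (canon \<Delta>) (Moment L cs) \<longleftrightarrow>
    (\<exists>\<Delta>'. prime_theory \<Delta>' \<and> \<Delta> \<subseteq> \<Delta>' \<and> type_of \<Delta>' = L \<and> (\<forall>c\<in>set cs. moment_le (canon \<Delta>') c))"
proof
  assume "moment_le (canon \<Delta>) (Moment L cs)"
  then obtain w where "subtree (canon \<Delta>) w" "label w = L" "\<forall>c\<in>set cs. moment_le w c"
    unfolding moment_le_iff[of "canon \<Delta>"] by auto
  then show "\<exists>\<Delta>'. prime_theory \<Delta>' \<and> \<Delta> \<subseteq> \<Delta>' \<and> type_of \<Delta>' = L \<and> (\<forall>c\<in>set cs. moment_le (canon \<Delta>') c)"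
    using subtree_canon assms(1) by fastforce
next
  assume "\<exists>\<Delta>'. prime_theory \<Delta>' \<and> \<Delta> \<subseteq> \<Delta>' \<and> type_of \<Delta>' = L \<and> (\<forall>c\<in>set cs. moment_le (canon \<Delta>') c)"
  then obtain \<Delta>' where \<Delta>': "prime_theory \<Delta>'" "\<Delta> \<subseteq> \<Delta>'" "type_of \<Delta>' = L"
    and below: "\<forall>c\<in>set cs. moment_le (canon \<Delta>') c"
    by blast
  show "moment_le (canon \<Delta>) (Moment L cs)"
  proof (cases "type_of \<Delta>' = type_of \<Delta>")
    case True
    then have "\<forall>c\<in>set cs. moment_le (canon \<Delta>) c"
      using below assms(2) \<Delta>' moment_le_canon_same_type by metis
    then show ?thesis
      using True \<Delta>'(3) subtree_refl by (intro moment_le.intros[of _ "canon \<Delta>"]) auto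
  next
    case False
    then have "canon \<Delta>' \<in> set (children (canon \<Delta>))"
      using \<Delta>' by (auto simp: children_canon strict_ext_def)
    then have "subtree (canon \<Delta>) (canon \<Delta>')"
      using subtree_child subtree_refl by blast
    then show ?thesis
      using \<Delta>'(3) below by (intro moment_le.intros) auto
  qed
qed

theorem moment_le_canon_iff_char_fml:
  "b \<in> canon_moments \<Longrightarrow> prime_theory \<Delta> \<Longrightarrow> moment_le (canon \<Delta>) b \<longleftrightarrow> char_fml b \<notin> \<Delta>"
proof (induction b arbitrary: \<Delta>)
  case (Moment L cs)
  obtain \<Delta>0 where "Moment L cs = canon \<Delta>0"
    using Moment.prems(1) unfolding canon_moments_def by blast
  then have L: "L = type_of \<Delta>0"
    using label_canon[of \<Delta>0] by (metis moment.sel(1))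
  have children: "c \<in> canon_moments" "label c \<noteq> L" if "c \<in> set cs" for c
    using children_canon_moments[OF Moment.prems(1)] that by auto
  have "finite (fst L)" "finite (snd L)"
    using finite_fragment by (simp_all add: L type_of_def)
  then have "char_fml (Moment L cs) \<notin> \<Delta> \<longleftrightarrow>
    (\<exists>\<Delta>'. prime_theory \<Delta>' \<and> \<Delta> \<subseteq> \<Delta>' \<and> snd L \<subseteq> \<Delta>' \<and> fst L \<inter> \<Delta>' = {} \<and>
       (\<forall>c\<in>set cs. char_fml c \<notin> \<Delta>'))"
    by (rule char_fml_notin_prime_theory[OF Moment.prems(2)])
  also have "\<dots> \<longleftrightarrow>
    (\<exists>\<Delta>'. prime_theory \<Delta>' \<and> \<Delta> \<subseteq> \<Delta>' \<and> type_of \<Delta>' = L \<and> (\<forall>c\<in>set cs. moment_le (canon \<Delta>') c))"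
    using Moment.IH children by (auto simp: L type_of_def)
  also have "\<dots> \<longleftrightarrow> moment_le (canon \<Delta>) (Moment L cs)"
    using moment_le_canon_iff[OF Moment.prems(2)] children by auto
  finally show ?case
    by simp
qed

section \<open>The successor relation and reachability\<close>

text \<open>Induction on \<open>gap \<Gamma>\<close>: a child \<open>canon \<Gamma>'\<close> of \<open>canon \<Gamma>\<close> is matched by \<open>canon \<Delta>\<close> itself if
  \<open>next_theory \<Gamma>'\<close> still has the type of \<open>\<Delta>\<close>, and otherwise by \<open>canon (next_theory \<Gamma>')\<close>.\<close>

lemma moment_succ_canon:
  "prime_theory \<Gamma> \<Longrightarrow> prime_theory \<Delta> \<Longrightarrow> \<Delta> \<subseteq> next_theory \<Gamma> \<Longrightarrow> type_of \<Delta> = type_of (next_theory \<Gamma>)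
    \<Longrightarrow> moment_succ canon_moments (canon \<Gamma>) (canon \<Delta>)"
proof (induction "gap \<Gamma>" arbitrary: \<Gamma> \<Delta> rule: less_induct)
  case less
  have "\<exists>d\<in>canon_moments. moment_le (canon \<Delta>) d \<and> moment_succ canon_moments (canon \<Gamma>') d"
    if "\<Gamma>' \<in> strict_ext \<Gamma>" for \<Gamma>'
  proof -
    have \<Gamma>': "prime_theory \<Gamma>'" "\<Gamma> \<subseteq> \<Gamma>'" "gap \<Gamma>' < gap \<Gamma>"
      using that gap_strict_ext by (auto simp: strict_ext_def)
    have next': "prime_theory (next_theory \<Gamma>')" "\<Delta> \<subseteq> next_theory \<Gamma>'"
      using less.prems \<Gamma>' prime_theory_next_theory next_theory_mono by blast+
    show ?thesis
    proof (cases "type_of (next_theory \<Gamma>') = type_of \<Delta>")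
      case True
      then show ?thesis
        using less.hyps[OF \<Gamma>'(3,1) less.prems(2) next'(2)] less.prems(2) moment_le_refl
          canon_in_canon_moments by auto
    next
      case False
      then show ?thesis
        using less.hyps[OF \<Gamma>'(3,1) next'(1)] moment_le_canon[OF next'] canon_in_canon_moments next'(1)
        by auto
    qed
  qed
  then show ?case
    using type_S_next_theory[OF less.prems(1)] less.prems(4)
    by (auto simp: moment_succ_iff[of _ "canon \<Gamma>"] children_canon)
qed

lemma moment_succ_canon_next_theory:
  "prime_theory \<Gamma> \<Longrightarrow> moment_succ canon_moments (canon \<Gamma>) (canon (next_theory \<Gamma>))"
  using moment_succ_canon prime_theory_next_theory by blast

definition canon_step :: "moment \<Rightarrow> moment \<Rightarrow> bool" where
  "canon_step a b \<longleftrightarrow> a \<in> canon_moments \<and> b \<in> canon_moments \<and> moment_succ canon_moments a b"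

lemma canon_step_path_in_canon_moments:
  "(canon_step ^^ n) a v \<Longrightarrow> a \<in> canon_moments \<Longrightarrow> v \<in> canon_moments"
  by (cases n) (auto simp: canon_step_def dest: relpowp_Suc_D2)

lemma canon_step_path_confluent:
  "(canon_step ^^ n) a v \<Longrightarrow> moment_le a a' \<Longrightarrow> a' \<in> canon_moments \<Longrightarrow>
     \<exists>v'. (canon_step ^^ n) a' v' \<and> moment_le v v'"
proof (induction n arbitrary: a a')
  case 0
  then show ?case
    by auto
next
  case (Suc n)
  then obtain a1 where a1: "canon_step a a1" "(canon_step ^^ n) a1 v"
    using relpowp_Suc_D2 by metis
  obtain b1 where b1: "b1 \<in> canon_moments" "moment_le a1 b1" "moment_succ canon_moments a' b1"
    using moment_succ_confluent[OF Suc.prems(2)] a1(1) by (auto simp: canon_step_def)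
  then have "canon_step a' b1"
    using Suc.prems(3) by (simp add: canon_step_def)
  then show ?case
    using Suc.IH[OF a1(2) b1(2,1)] relpowp_Suc_I2 by metis
qed

definition reaching :: "fml \<Rightarrow> moment set" where
  "reaching f = {a \<in> canon_moments. \<exists>n v. (canon_step ^^ n) a v \<and> f \<in> snd (label v)}"

lemma reaching_upward_closed:
  assumes "a \<in> reaching f" "a' \<in> canon_moments" "moment_le a a'"
  shows "a' \<in> reaching f"
proof -
  obtain n v where "(canon_step ^^ n) a v" "f \<in> snd (label v)" "a \<in> canon_moments"
    using assms(1) by (auto simp: reaching_def)
  moreover obtain v' where "(canon_step ^^ n) a' v'" "moment_le v v'"
    using canon_step_path_confluent[OF calculation(1) assms(3,2)] by blast
  ultimately show ?thesis
    using assms(2) canon_step_path_in_canon_moments canon_moments_moment_le_label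
    unfolding reaching_def by blast
qed

lemma upward_closed_definable:
  assumes "U \<subseteq> canon_moments"
    and upward: "\<And>a b. a \<in> U \<Longrightarrow> b \<in> canon_moments \<Longrightarrow> moment_le a b \<Longrightarrow> b \<in> U"
  obtains \<psi> where "\<And>\<Delta>. prime_theory \<Delta> \<Longrightarrow> \<psi> \<in> \<Delta> \<longleftrightarrow> canon \<Delta> \<in> U"
proof
  fix \<Delta> assume \<Delta>: "prime_theory \<Delta>"
  let ?\<psi> = "Conj (map char_fml (list_of (canon_moments - U)))"
  have "?\<psi> \<in> \<Delta> \<longleftrightarrow> (\<forall>b\<in>canon_moments - U. char_fml b \<in> \<Delta>)"
    using prime_theory_Conj[OF \<Delta>] set_list_of[OF finite_Diff[OF finite_canon_moments]] by auto
  also have "\<dots> \<longleftrightarrow> (\<forall>b\<in>canon_moments - U. \<not> moment_le (canon \<Delta>) b)"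
    using moment_le_canon_iff_char_fml \<Delta> by blast
  also have "\<dots> \<longleftrightarrow> canon \<Delta> \<in> U"
    using upward canon_in_canon_moments[OF \<Delta>] moment_le_refl by blast
  finally show "?\<psi> \<in> \<Delta> \<longleftrightarrow> canon \<Delta> \<in> U" .
qed

lemma canon_in_reaching:
  assumes "f \<in> \<Sigma>" "prime_theory \<Delta>" "f \<in> \<Delta>"
  shows "canon \<Delta> \<in> reaching f"
proof -
  have "(canon_step ^^ 0) (canon \<Delta>) (canon \<Delta>)" "f \<in> snd (label (canon \<Delta>))"
    using assms(1,3) by (simp_all add: type_of_def)
  then show ?thesis
    unfolding reaching_def using canon_in_canon_moments[OF assms(2)] by blast
qed

lemma reaching_next_theory:
  assumes "prime_theory \<Delta>" "canon (next_theory \<Delta>) \<in> reaching f"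
  shows "canon \<Delta> \<in> reaching f"
proof -
  obtain n v where path: "(canon_step ^^ n) (canon (next_theory \<Delta>)) v" and "f \<in> snd (label v)"
    using assms(2) unfolding reaching_def by blast
  have "canon_step (canon \<Delta>) (canon (next_theory \<Delta>))"
    unfolding canon_step_def
    using assms(1) moment_succ_canon_next_theory prime_theory_next_theory canon_in_canon_moments
    by blast
  then have "(canon_step ^^ Suc n) (canon \<Delta>) v"
    using path by (rule relpowp_Suc_I2)
  with \<open>f \<in> snd (label v)\<close> show ?thesis
    using canon_in_canon_moments[OF assms(1)] unfolding reaching_def by blast
qed

lemma reaching_if_Dia:
  assumes "a \<in> canon_moments" "Dia f \<in> snd (label a)"
  shows "a \<in> reaching f"
proof -
  have "reaching f \<subseteq> canon_moments"
    by (auto simp: reaching_def)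
  then obtain \<psi> where \<psi>: "\<And>\<Delta>. prime_theory \<Delta> \<Longrightarrow> \<psi> \<in> \<Delta> \<longleftrightarrow> canon \<Delta> \<in> reaching f"
    using upward_closed_definable reaching_upward_closed by blast
  obtain \<Gamma> where \<Gamma>: "prime_theory \<Gamma>" "a = canon \<Gamma>"
    using assms(1) unfolding canon_moments_def by blast
  have "Dia f \<in> \<Sigma>" "Dia f \<in> \<Gamma>"
    using assms(2) \<Gamma>(2) by (auto simp: type_of_def)
  have "ITL0 (Imp f \<psi>)"
    using \<psi> canon_in_reaching closed_Dia[OF \<open>Dia f \<in> \<Sigma>\<close>] by (blast intro: ITL0_Imp_completeness)
  then have "Dia \<psi> \<in> \<Gamma>"
    using prime_theory_ITL0_Imp[OF \<Gamma>(1) dia_mono] \<open>Dia f \<in> \<Gamma>\<close> by blast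
  moreover have "ITL0 (Imp (Nxt \<psi>) \<psi>)"
  proof (rule ITL0_Imp_completeness)
    fix \<Delta> assume \<Delta>: "prime_theory \<Delta>" "Nxt \<psi> \<in> \<Delta>"
    then have "\<psi> \<in> next_theory \<Delta>"
      by (simp add: next_theory_def)
    then have "canon (next_theory \<Delta>) \<in> reaching f"
      using \<psi> prime_theory_next_theory[OF \<Delta>(1)] by blast
    then show "\<psi> \<in> \<Delta>"
      using \<psi> \<Delta>(1) reaching_next_theory by blast
  qed
  ultimately have "\<psi> \<in> \<Gamma>"
    using prime_theory_ITL0_Imp[OF \<Gamma>(1) dia_ind] by blast
  then show ?thesis
    using \<psi> \<Gamma> by blast
qed

section \<open>The finite quasimodel\<close>

text \<open>On \<open>canon_moments\<close>, \<open>moment_le\<close> is only a preorder; the worlds of the quasimodel are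
  chosen representatives of its equivalence classes.\<close>

definition rep :: "moment \<Rightarrow> moment" where
  "rep a = (SOME x. x \<in> canon_moments \<and> moment_le a x \<and> moment_le x a)"

lemma rep_equiv:
  "a \<in> canon_moments \<Longrightarrow> rep a \<in> canon_moments \<and> moment_le a (rep a) \<and> moment_le (rep a) a"
  unfolding rep_def by (rule someI[of _ a]) (simp add: moment_le_refl)

lemma rep_cong:
  assumes "moment_le a b" "moment_le b a"
  shows "rep a = rep b"
proof -
  have "moment_le a x \<and> moment_le x a \<longleftrightarrow> moment_le b x \<and> moment_le x b" for x
    using assms moment_le_trans by blast
  then show ?thesis
    unfolding rep_def by simp
qed

lemma label_rep:
  assumes "a \<in> canon_moments"
  shows "label (rep a) = label a"
proof -
  have "rep a \<in> canon_moments" "snd (label (rep a)) = snd (label a)"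
    using rep_equiv[OF assms] canon_moments_moment_le_label assms by (auto intro: subset_antisym)
  then show ?thesis
    using canon_moments_label_eq assms by blast
qed

definition worlds :: "moment set" where
  "worlds = rep ` canon_moments"

definition world_le :: "moment \<Rightarrow> moment \<Rightarrow> bool" where
  "world_le x y \<longleftrightarrow> x \<in> worlds \<and> y \<in> worlds \<and> moment_le x y"

definition world_succ :: "moment \<Rightarrow> moment \<Rightarrow> bool" where
  "world_succ x y \<longleftrightarrow>
     x \<in> worlds \<and> y \<in> worlds \<and> (\<exists>y0\<in>canon_moments. moment_succ canon_moments x y0 \<and> rep y0 = y)"

lemma finite_worlds: "finite worlds"
  unfolding worlds_def using finite_canon_moments by simp

lemma worlds_subset: "worlds \<subseteq> canon_moments"
  unfolding worlds_def using rep_equiv by blast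

lemma rep_in_worlds: "a \<in> canon_moments \<Longrightarrow> rep a \<in> worlds"
  unfolding worlds_def by blast

lemma rep_world:
  assumes "x \<in> worlds"
  shows "rep x = x"
proof -
  obtain a where "a \<in> canon_moments" "x = rep a"
    using assms unfolding worlds_def by blast
  then show ?thesis
    using rep_cong[of x a] rep_equiv by simp
qed

lemma world_succ_step:
  assumes "x \<in> worlds" "b \<in> canon_moments" "moment_succ canon_moments x b"
  shows "world_succ x (rep b) \<and> moment_le b (rep b)"
  using assms rep_equiv rep_in_worlds unfolding world_succ_def by blast

lemma world_succ_path:
  "(canon_step ^^ n) a v \<Longrightarrow> x \<in> worlds \<Longrightarrow> moment_le a x \<Longrightarrow>
     \<exists>v'. (world_succ ^^ n) x v' \<and> moment_le v v'"
proof (induction n arbitrary: a x)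
  case 0
  then show ?case
    by auto
next
  case (Suc n)
  then obtain a1 where a1: "canon_step a a1" "(canon_step ^^ n) a1 v"
    using relpowp_Suc_D2 by metis
  obtain b1 where b1: "b1 \<in> canon_moments" "moment_le a1 b1" "moment_succ canon_moments x b1"
    using moment_succ_confluent[OF Suc.prems(3)] a1(1) by (auto simp: canon_step_def)
  then have "world_succ x (rep b1)" "moment_le a1 (rep b1)"
    using world_succ_step[OF Suc.prems(2)] moment_le_trans by blast+
  then show ?case
    using Suc.IH[OF a1(2) rep_in_worlds[OF b1(1)]] relpowp_Suc_I2 by metis
qed

lemma world_le_antisym:
  "world_le x y \<Longrightarrow> world_le y x \<Longrightarrow> x = y"
  unfolding world_le_def using rep_cong rep_world by metis

lemma is_type_label_world: "w \<in> worlds \<Longrightarrow> is_type \<Sigma> (label w)"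
  using worlds_subset is_type_type_of unfolding canon_moments_def by auto

lemma type_le_world_le: "world_le w v \<Longrightarrow> type_le (label w) (label v)"
  unfolding world_le_def type_le_def using worlds_subset canon_moments_moment_le_label by blast

lemma world_le_Imp_witness:
  assumes w: "w \<in> worlds" and "Imp a b \<in> fst (label w)"
  shows "\<exists>v. world_le w v \<and> a \<in> snd (label v) \<and> b \<in> fst (label v)"
proof -
  obtain \<Delta> where \<Delta>: "prime_theory \<Delta>" "w = canon \<Delta>"
    using w worlds_subset unfolding canon_moments_def by blast
  then have "Imp a b \<in> \<Sigma>" "Imp a b \<notin> \<Delta>"
    using assms(2) by (auto simp: type_of_def)
  then obtain \<Delta>' where \<Delta>': "prime_theory \<Delta>'" "\<Delta> \<subseteq> \<Delta>'" "a \<in> \<Delta>'" "b \<notin> \<Delta>'"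
    using prime_theory_Imp_counterexample[OF \<Delta>(1)] by blast
  let ?v = "rep (canon \<Delta>')"
  have "moment_le w ?v"
    using \<Delta> moment_le_canon[OF \<Delta>'(1,2)] rep_equiv canon_in_canon_moments[OF \<Delta>'(1)]
      moment_le_trans by blast
  then have "world_le w ?v"
    unfolding world_le_def using w rep_in_worlds canon_in_canon_moments[OF \<Delta>'(1)] by blast
  moreover have "label ?v = type_of \<Delta>'"
    using label_rep canon_in_canon_moments[OF \<Delta>'(1)] by simp
  ultimately show ?thesis
    using \<Delta>' closed_Imp[OF \<open>Imp a b \<in> \<Sigma>\<close>] by (auto simp: type_of_def)
qed

lemma world_succ_serial:
  assumes "w \<in> worlds"
  shows "\<exists>v. world_succ w v"
proof -
  obtain \<Delta> where "prime_theory \<Delta>" "w = canon \<Delta>"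
    using assms worlds_subset unfolding canon_moments_def by blast
  then show ?thesis
    using world_succ_step[OF assms] moment_succ_canon_next_theory prime_theory_next_theory
      canon_in_canon_moments by metis
qed

lemma world_succ_confluent:
  assumes "world_le w w'" "world_succ w v"
  shows "\<exists>v'. world_le v v' \<and> world_succ w' v'"
proof -
  obtain y where y: "y \<in> canon_moments" "moment_succ canon_moments w y" "rep y = v"
    using assms(2) unfolding world_succ_def by blast
  obtain b where b: "b \<in> canon_moments" "moment_le y b" "moment_succ canon_moments w' b"
    using moment_succ_confluent y(1,2) assms(1) unfolding world_le_def by blast
  have "w' \<in> worlds" "v \<in> worlds"
    using assms unfolding world_le_def world_succ_def by auto
  then have "world_succ w' (rep b)" "moment_le b (rep b)"
    using world_succ_step b(1,3) by blast+
  moreover have "moment_le v y"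
    using rep_equiv y by blast
  ultimately show ?thesis
    unfolding world_le_def using \<open>v \<in> worlds\<close> b(2) rep_in_worlds[OF b(1)] moment_le_trans
    by blast
qed

lemma world_succ_type_S: "world_succ w v \<Longrightarrow> type_S (label w) (label v)"
  unfolding world_succ_def using moment_succ_iff label_rep by metis

lemma world_succ_omega_sensible:
  assumes w: "w \<in> worlds" and "Dia f \<in> snd (label w)"
  shows "\<exists>n v. (world_succ ^^ n) w v \<and> f \<in> snd (label v)"
proof -
  have "w \<in> reaching f"
    using reaching_if_Dia assms worlds_subset by blast
  then obtain n v where nv: "(canon_step ^^ n) w v" "f \<in> snd (label v)"
    unfolding reaching_def by blast
  obtain v' where "(world_succ ^^ n) w v'" "moment_le v v'"
    using world_succ_path[OF nv(1) w moment_le_refl] by blast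
  moreover have "v \<in> canon_moments"
    using canon_step_path_in_canon_moments nv(1) w worlds_subset by blast
  ultimately show ?thesis
    using nv(2) canon_moments_moment_le_label by blast
qed

theorem quasimodel_worlds: "quasimodel \<Sigma> worlds world_le world_succ label"
  unfolding quasimodel_def
proof (intro conjI)
  show "\<forall>w v. world_le w v \<longrightarrow> w \<in> worlds \<and> v \<in> worlds"
    by (simp add: world_le_def)
  show "\<forall>w\<in>worlds. world_le w w"
    by (simp add: world_le_def moment_le_refl)
  show "\<forall>u\<in>worlds. \<forall>v\<in>worlds. \<forall>w\<in>worlds. world_le u v \<and> world_le v w \<longrightarrow> world_le u w"
    unfolding world_le_def using moment_le_trans by blast
  show "\<forall>u\<in>worlds. \<forall>v\<in>worlds. world_le u v \<and> world_le v u \<longrightarrow> u = v"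
    using world_le_antisym by blast
  show "\<forall>w\<in>worlds. is_type \<Sigma> (label w)"
    using is_type_label_world by blast
  show "\<forall>w v. world_le w v \<longrightarrow> type_le (label w) (label v)"
    using type_le_world_le by blast
  show "\<forall>w\<in>worlds. \<forall>a b. Imp a b \<in> fst (label w) \<longrightarrow>
          (\<exists>v. world_le w v \<and> a \<in> snd (label v) \<and> b \<in> fst (label v))"
    using world_le_Imp_witness by blast
  show "\<forall>w v. world_succ w v \<longrightarrow> w \<in> worlds \<and> v \<in> worlds"
    by (simp add: world_succ_def)
  show "\<forall>w\<in>worlds. \<exists>v. world_succ w v"
    using world_succ_serial by blast
  show "\<forall>w w' v. world_le w w' \<and> world_succ w v \<longrightarrow> (\<exists>v'. world_le v v' \<and> world_succ w' v')"
    using world_succ_confluent by blast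
  show "\<forall>w v. world_succ w v \<longrightarrow> type_S (label w) (label v)"
    using world_succ_type_S by blast
  show "\<forall>w\<in>worlds. \<forall>f. Dia f \<in> snd (label w) \<longrightarrow> (\<exists>n v. (world_succ ^^ n) w v \<and> f \<in> snd (label v))"
    using world_succ_omega_sensible by blast
qed

lemma falsified_world:
  assumes "\<not> ITL0 \<phi>" "\<phi> \<in> \<Sigma>"
  shows "\<exists>w\<in>worlds. \<phi> \<in> fst (label w)"
proof -
  obtain \<Delta> where "prime_theory \<Delta>" "\<phi> \<notin> \<Delta>"
    using prime_theory_extension[of "{}" \<phi>] ITL0_if_derivable_empty assms(1) by blast
  then show ?thesis
    using rep_in_worlds label_rep canon_in_canon_moments assms(2) by (force simp: type_of_def)
qed

end

section \<open>Transfer of quasimodels along injections\<close>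

lemma quasimodelD:
  assumes "quasimodel \<Sigma> W le S lab"
  shows quasimodel_le_in: "le w v \<Longrightarrow> w \<in> W \<and> v \<in> W"
    and quasimodel_le_refl: "w \<in> W \<Longrightarrow> le w w"
    and quasimodel_le_trans: "le u v \<Longrightarrow> le v w \<Longrightarrow> le u w"
    and quasimodel_le_antisym: "le u v \<Longrightarrow> le v u \<Longrightarrow> u = v"
    and quasimodel_is_type: "w \<in> W \<Longrightarrow> is_type \<Sigma> (lab w)"
    and quasimodel_type_le: "le w v \<Longrightarrow> type_le (lab w) (lab v)"
    and quasimodel_Imp: "w \<in> W \<Longrightarrow> Imp a b \<in> fst (lab w) \<Longrightarrow>
           \<exists>v. le w v \<and> a \<in> snd (lab v) \<and> b \<in> fst (lab v)"
    and quasimodel_S_in: "S w v \<Longrightarrow> w \<in> W \<and> v \<in> W"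
    and quasimodel_serial: "w \<in> W \<Longrightarrow> \<exists>v. S w v"
    and quasimodel_confluent: "le w w' \<Longrightarrow> S w v \<Longrightarrow> \<exists>v'. le v v' \<and> S w' v'"
    and quasimodel_type_S: "S w v \<Longrightarrow> type_S (lab w) (lab v)"
    and quasimodel_Dia: "w \<in> W \<Longrightarrow> Dia a \<in> snd (lab w) \<Longrightarrow> \<exists>n v. (S ^^ n) w v \<and> a \<in> snd (lab v)"
proof -
  from assms obtain
    le_in: "\<forall>w v. le w v \<longrightarrow> w \<in> W \<and> v \<in> W" and
    le_refl: "\<forall>w\<in>W. le w w" and
    le_trans: "\<forall>u\<in>W. \<forall>v\<in>W. \<forall>w\<in>W. le u v \<and> le v w \<longrightarrow> le u w" and
    le_antisym: "\<forall>u\<in>W. \<forall>v\<in>W. le u v \<and> le v u \<longrightarrow> u = v" and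
    is_type: "\<forall>w\<in>W. is_type \<Sigma> (lab w)" and
    type_le: "\<forall>w v. le w v \<longrightarrow> type_le (lab w) (lab v)" and
    Imp: "\<forall>w\<in>W. \<forall>a b. Imp a b \<in> fst (lab w) \<longrightarrow> (\<exists>v. le w v \<and> a \<in> snd (lab v) \<and> b \<in> fst (lab v))" and
    S_in: "\<forall>w v. S w v \<longrightarrow> w \<in> W \<and> v \<in> W" and
    serial: "\<forall>w\<in>W. \<exists>v. S w v" and
    confluent: "\<forall>w w' v. le w w' \<and> S w v \<longrightarrow> (\<exists>v'. le v v' \<and> S w' v')" and
    type_S: "\<forall>w v. S w v \<longrightarrow> type_S (lab w) (lab v)" and
    Dia: "\<forall>w\<in>W. \<forall>a. Dia a \<in> snd (lab w) \<longrightarrow> (\<exists>n v. (S ^^ n) w v \<and> a \<in> snd (lab v))"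
    unfolding quasimodel_def by (elim conjE) (rule that)
  show "le w v \<Longrightarrow> w \<in> W \<and> v \<in> W"
    using le_in by blast
  show "w \<in> W \<Longrightarrow> le w w"
    using le_refl by blast
  show "le u v \<Longrightarrow> le v w \<Longrightarrow> le u w"
    using le_in le_trans by blast
  show "le u v \<Longrightarrow> le v u \<Longrightarrow> u = v"
    using le_in le_antisym by metis
  show "w \<in> W \<Longrightarrow> is_type \<Sigma> (lab w)"
    using is_type by blast
  show "le w v \<Longrightarrow> type_le (lab w) (lab v)"
    using type_le by blast
  show "w \<in> W \<Longrightarrow> Imp a b \<in> fst (lab w) \<Longrightarrow> \<exists>v. le w v \<and> a \<in> snd (lab v) \<and> b \<in> fst (lab v)"
    using Imp by blast
  show "S w v \<Longrightarrow> w \<in> W \<and> v \<in> W"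
    using S_in by blast
  show "w \<in> W \<Longrightarrow> \<exists>v. S w v"
    using serial by blast
  show "le w w' \<Longrightarrow> S w v \<Longrightarrow> \<exists>v'. le v v' \<and> S w' v'"
    using confluent by blast
  show "S w v \<Longrightarrow> type_S (lab w) (lab v)"
    using type_S by blast
  show "w \<in> W \<Longrightarrow> Dia a \<in> snd (lab w) \<Longrightarrow> \<exists>n v. (S ^^ n) w v \<and> a \<in> snd (lab v)"
    using Dia by blast
qed

lemma quasimodelI:
  assumes "\<And>w v. le w v \<Longrightarrow> w \<in> W \<and> v \<in> W"
    and "\<And>w. w \<in> W \<Longrightarrow> le w w"
    and "\<And>u v w. le u v \<Longrightarrow> le v w \<Longrightarrow> le u w"
    and "\<And>u v. le u v \<Longrightarrow> le v u \<Longrightarrow> u = v"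
    and "\<And>w. w \<in> W \<Longrightarrow> is_type \<Sigma> (lab w)"
    and "\<And>w v. le w v \<Longrightarrow> type_le (lab w) (lab v)"
    and "\<And>w a b. w \<in> W \<Longrightarrow> Imp a b \<in> fst (lab w) \<Longrightarrow>
           \<exists>v. le w v \<and> a \<in> snd (lab v) \<and> b \<in> fst (lab v)"
    and "\<And>w v. S w v \<Longrightarrow> w \<in> W \<and> v \<in> W"
    and "\<And>w. w \<in> W \<Longrightarrow> \<exists>v. S w v"
    and "\<And>w w' v. le w w' \<Longrightarrow> S w v \<Longrightarrow> \<exists>v'. le v v' \<and> S w' v'"
    and "\<And>w v. S w v \<Longrightarrow> type_S (lab w) (lab v)"
    and "\<And>w a. w \<in> W \<Longrightarrow> Dia a \<in> snd (lab w) \<Longrightarrow> \<exists>n v. (S ^^ n) w v \<and> a \<in> snd (lab v)"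
  shows "quasimodel \<Sigma> W le S lab"
  unfolding quasimodel_def
proof (intro conjI)
  show "\<forall>u\<in>W. \<forall>v\<in>W. \<forall>w\<in>W. le u v \<and> le v w \<longrightarrow> le u w"
    using assms(3) by blast
  show "\<forall>u\<in>W. \<forall>v\<in>W. le u v \<and> le v u \<longrightarrow> u = v"
    using assms(4) by blast
  show "\<forall>w\<in>W. \<forall>a b. Imp a b \<in> fst (lab w) \<longrightarrow> (\<exists>v. le w v \<and> a \<in> snd (lab v) \<and> b \<in> fst (lab v))"
    using assms(7) by blast
  show "\<forall>w w' v. le w w' \<and> S w v \<longrightarrow> (\<exists>v'. le v v' \<and> S w' v')"
    using assms(10) by blast
  show "\<forall>w\<in>W. \<forall>a. Dia a \<in> snd (lab w) \<longrightarrow> (\<exists>n v. (S ^^ n) w v \<and> a \<in> snd (lab v))"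
    using assms(12) by blast
qed (use assms(1,2,5,6,8,9,11) in auto)

lemma relpowp_map:
  assumes "\<And>x y. R x y \<Longrightarrow> R' (f x) (f y)"
  shows "(R ^^ n) a b \<Longrightarrow> (R' ^^ n) (f a) (f b)"
proof (induction n arbitrary: b)
  case (Suc n)
  then obtain c where "(R ^^ n) a c" "R c b"
    using relpowp_Suc_E by metis
  then show ?case
    by (rule relpowp_Suc_I[OF Suc.IH assms])
qed simp

lemma relpowp_target_in:
  "(R ^^ n) a b \<Longrightarrow> a \<in> A \<Longrightarrow> (\<And>x y. R x y \<Longrightarrow> y \<in> A) \<Longrightarrow> b \<in> A"
  by (induction n arbitrary: b) auto

lemma quasimodel_inj_image:
  assumes q: "quasimodel \<Sigma> W le S lab" and inj: "inj_on f W"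
  defines "g \<equiv> inv_into W f"
  shows "quasimodel \<Sigma> (f ` W) (\<lambda>x y. x \<in> f ` W \<and> y \<in> f ` W \<and> le (g x) (g y))
           (\<lambda>x y. x \<in> f ` W \<and> y \<in> f ` W \<and> S (g x) (g y)) (\<lambda>x. lab (g x))"
    (is "quasimodel \<Sigma> ?V ?le ?S _")
proof -
  have g_in: "x \<in> ?V \<Longrightarrow> g x \<in> W" and f_g: "x \<in> ?V \<Longrightarrow> f (g x) = x" for x
    unfolding g_def by (auto intro: inv_into_into f_inv_into_f)
  have inj_g: "inj_on g ?V"
    unfolding g_def by (simp add: inj_on_inv_into)
  have le_f: "le a b \<Longrightarrow> ?le (f a) (f b) \<and> g (f b) = b"
    and S_f: "S a b \<Longrightarrow> ?S (f a) (f b) \<and> g (f b) = b" for a b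
    using quasimodel_le_in[OF q] quasimodel_S_in[OF q] inj by (auto simp: g_def)
  show ?thesis
  proof (rule quasimodelI)
    show "u = v" if "?le u v" "?le v u" for u v
      using inj_onD[OF inj_g quasimodel_le_antisym[OF q]] that by blast
    show "\<exists>v. ?le w v \<and> a \<in> snd (lab (g v)) \<and> b \<in> fst (lab (g v))"
      if w: "w \<in> ?V" "Imp a b \<in> fst (lab (g w))" for w a b
    proof -
      obtain v where "le (g w) v" "a \<in> snd (lab v)" "b \<in> fst (lab v)"
        using quasimodel_Imp[OF q g_in[OF w(1)] w(2)] by blast
      then show ?thesis
        using le_f f_g[OF w(1)] by (intro exI[of _ "f v"]) fastforce
    qed
    show "\<exists>v. ?S w v" if w: "w \<in> ?V" for w
    proof -
      obtain v where "S (g w) v"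
        using quasimodel_serial[OF q g_in[OF w]] by blast
      then show ?thesis
        using S_f f_g[OF w] by fastforce
    qed
    show "\<exists>v'. ?le v v' \<and> ?S w' v'" if wv: "?le w w'" "?S w v" for w w' v
    proof -
      obtain v' where "le (g v) v'" "S (g w') v'"
        using quasimodel_confluent[OF q, of "g w" "g w'" "g v"] wv by auto
      then show ?thesis
        using le_f S_f f_g wv by (intro exI[of _ "f v'"]) fastforce
    qed
    show "\<exists>n v. (?S ^^ n) w v \<and> a \<in> snd (lab (g v))"
      if w: "w \<in> ?V" "Dia a \<in> snd (lab (g w))" for w a
    proof -
      obtain n v where nv: "(S ^^ n) (g w) v" "a \<in> snd (lab v)"
        using quasimodel_Dia[OF q g_in[OF w(1)] w(2)] by blast
      have "(?S ^^ n) w (f v)"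
        using relpowp_map[of S ?S f, OF conjunct1[OF S_f] nv(1)] f_g[OF w(1)] by simp
      moreover have "g (f v) = v"
        using relpowp_target_in[OF nv(1) g_in[OF w(1)]] quasimodel_S_in[OF q] inj
        by (auto simp: g_def)
      ultimately show ?thesis
        using nv(2) by (intro exI[of _ n] exI[of _ "f v"]) simp
    qed
  qed (auto intro: quasimodel_le_refl[OF q] quasimodel_le_trans[OF q] quasimodel_is_type[OF q]
      quasimodel_type_le[OF q] quasimodel_type_S[OF q] g_in)
qed

theorem theorem7p5:
  fixes \<phi> :: fml
  assumes "\<not> ITL0 \<phi>"
  shows "\<exists>(W :: nat set) le S lab w.
           finite W \<and> quasimodel (sub \<phi>) W le S lab \<and> w \<in> W \<and> \<phi> \<in> fst (lab w)"
proof -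
  interpret closed_fragment "sub \<phi>"
    by unfold_locales (simp_all add: finite_sub sub_trans)
  obtain w where w: "w \<in> worlds" "\<phi> \<in> fst (label w)"
    using falsified_world[OF assms sub_refl] by blast
  obtain f :: "moment \<Rightarrow> nat" where f: "inj_on f worlds"
    using finite_imp_inj_to_nat_seg[OF finite_worlds] by blast
  let ?g = "inv_into worlds f"
  have "quasimodel (sub \<phi>) (f ` worlds) (\<lambda>x y. x \<in> f ` worlds \<and> y \<in> f ` worlds \<and> world_le (?g x) (?g y))
      (\<lambda>x y. x \<in> f ` worlds \<and> y \<in> f ` worlds \<and> world_succ (?g x) (?g y)) (\<lambda>x. label (?g x))"
    using quasimodel_inj_image[OF quasimodel_worlds f] by simp
  moreover have "\<phi> \<in> fst (label (?g (f w)))"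
    using w f by simp
  ultimately show ?thesis
    using finite_worlds w(1) by blast
qed

end
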